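(* Let $S=\mathbb{R}_{\max,+}$, let $A=(a_{ij})\in M_{m\times n}(S)$ have every column with at least one entry different from $-\infty$, let $b\in S^m$ be regular, and suppose the system $AX=b$ has a solution. Let $Q$ be the associated normalized matrix of the system, and let $k$ be the number of distinct column indices $j$ such that some row of $Q$ contains exactly one column minimum element and that element lies in column $j$. Let $A_{j_1},\dots,A_{j_p}$ be any linearly independent set of columns of $A$ such that $b$ is a linear combination of them, and let $\mathcal{D}_f=n-p$ be the corresponding number of free variables (degrees of freedom). Then: (1) if $k=0$, then $\mathcal{D}_f\le n-1$; (2) if $k\neq0$, then $\mathcal{D}_f\le n-k$.
   Context: $\mathbb{R}_{\max,+}=(\mathbb{R}\cup\{-\infty\},\max,+,-\infty,0)$; $(AX)_i=\max_j(a_{ij}+x_j)$. A vector is regular if no entry is $-\infty$. A linear combination of vectors $v_1,\dots,v_p\in S^m$ is $\max_l(v_l+s_l)$ with $s_l\in S$ (entrywise). A set $\mathcal{A}$ of vectors is linearly independent if no $v\in\mathcal{A}$ is a linear combination of the elements of $\mathcal{A}\setminus\{v\}$. If $A_{j_1},\dots,A_{j_p}$ are linearly independent columns of which $b$ is a linear combination, $x_{j_1},\dots,x_{j_p}$ are called leading variables, the others free variables, and $\mathcal{D}_f$ is the number of free variables. Normalization: $\hat A_j$ is the arithmetic mean of the entries of column $A_j$ that are not $-\infty$; $\tilde a_{ij}=a_{ij}-\hat A_j$; $\hat b=\frac{1}{m}\sum_i b_i$, $\tilde b_i=b_i-\hat b$. The associated normalized matrix $Q=(q_{ij})$ has $q_{ij}=\tilde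 b_i-\tilde a_{ij}$ if $a_{ij}\neq-\infty$ and $q_{ij}=(-\infty)^-$ (a symbol larger than every real number) if $a_{ij}=-\infty$. An entry $q_{ij}$ is a column minimum element if $q_{ij}=\min_l q_{lj}$. *)

theory Defs
  imports "HOL-Library.Extended_Real"
begin

text \<open>Max-plus semiring R_max,+ represented inside ereal: its elements are the
  ereals different from PInfty; MInfty plays the role of the zero -\<infinity>.\<close>

definition in_S :: "ereal \<Rightarrow> bool" where
  "in_S x \<longleftrightarrow> x \<noteq> \<infinity>"

definition mp_lincomb :: "(nat \<Rightarrow> nat \<Rightarrow> ereal) \<Rightarrow> nat set \<Rightarrow> (nat \<Rightarrow> ereal) \<Rightarrow> nat \<Rightarrow> ereal" where
  "mp_lincomb A J s i = (SUP l\<in>J. A i l + s l)"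

definition is_lincomb :: "nat \<Rightarrow> (nat \<Rightarrow> nat \<Rightarrow> ereal) \<Rightarrow> nat set \<Rightarrow> (nat \<Rightarrow> ereal) \<Rightarrow> bool" where
  "is_lincomb m A J v \<longleftrightarrow>
     (\<exists>s. (\<forall>l\<in>J. in_S (s l)) \<and> (\<forall>i<m. v i = mp_lincomb A J s i))"

definition lin_indep_cols :: "nat \<Rightarrow> (nat \<Rightarrow> nat \<Rightarrow> ereal) \<Rightarrow> nat set \<Rightarrow> bool" where
  "lin_indep_cols m A J \<longleftrightarrow> (\<forall>j\<in>J. \<not> is_lincomb m A (J - {j}) (\<lambda>i. A i j))"

definition has_solution :: "nat \<Rightarrow> nat \<Rightarrow> (nat \<Rightarrow> nat \<Rightarrow> ereal) \<Rightarrow> (nat \<Rightarrow> ereal) \<Rightarrow> bool" where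
  "has_solution m n A b \<longleftrightarrow>
     (\<exists>x. (\<forall>j<n. in_S (x j)) \<and> (\<forall>i<m. (SUP j\<in>{..<n}. A i j + x j) = b i))"

definition col_mean :: "nat \<Rightarrow> (nat \<Rightarrow> nat \<Rightarrow> ereal) \<Rightarrow> nat \<Rightarrow> real" where
  "col_mean m A j =
     (\<Sum>i\<in>{i. i < m \<and> A i j \<noteq> -\<infinity>}. real_of_ereal (A i j)) / real (card {i. i < m \<and> A i j \<noteq> -\<infinity>})"

definition vec_mean :: "nat \<Rightarrow> (nat \<Rightarrow> ereal) \<Rightarrow> real" where
  "vec_mean m b = (\<Sum>i<m. real_of_ereal (b i)) / real m"

text \<open>Associated normalized matrix Q; the symbol (-\<infinity>)^- (larger than every real)
  is represented by \<infinity>.\<close>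
definition norm_matrix :: "nat \<Rightarrow> (nat \<Rightarrow> nat \<Rightarrow> ereal) \<Rightarrow> (nat \<Rightarrow> ereal) \<Rightarrow> nat \<Rightarrow> nat \<Rightarrow> ereal" where
  "norm_matrix m A b i j =
     (if A i j = -\<infinity> then \<infinity>
      else ereal ((real_of_ereal (b i) - vec_mean m b) - (real_of_ereal (A i j) - col_mean m A j)))"

definition col_min_elem :: "nat \<Rightarrow> (nat \<Rightarrow> nat \<Rightarrow> ereal) \<Rightarrow> nat \<Rightarrow> nat \<Rightarrow> bool" where
  "col_min_elem m Q i j \<longleftrightarrow> (\<forall>l<m. Q i j \<le> Q l j)"

definition k_count :: "nat \<Rightarrow> nat \<Rightarrow> (nat \<Rightarrow> nat \<Rightarrow> ereal) \<Rightarrow> nat" where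
  "k_count m n Q = card {j. j < n \<and> (\<exists>i<m. col_min_elem m Q i j \<and>
        (\<forall>j'<n. col_min_elem m Q i j' \<longrightarrow> j' = j))}"

end

theory Submission
  imports Defs
begin

text \<open>If b is a linear combination of the columns indexed by J, then in every row i some term
  A i l + s l of the combination attains b i. Since q_rl = b_r - a_rl + const_l and
  b_r \<ge> a_rl + s_l in every row, such an l has its column minimum of Q in row i. Hence every
  row of Q carries a column minimum in a column of J: a row whose only column minimum lies in
  column j forces j \<in> J, so k \<le> |J|, and |J| \<ge> 1 as soon as Q has a row.\<close>

lemma mp_lincomb_attained:
  assumes "finite J" and "mp_lincomb A J s i \<noteq> -\<infinity>"
  shows "\<exists>l\<in>J. mp_lincomb A J s i = A i l + s l"
proof -
  have "J \<noteq> {}"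
    using assms(2) by (auto simp: mp_lincomb_def bot_ereal_def)
  then have "mp_lincomb A J s i = Max ((\<lambda>l. A i l + s l) ` J)"
    using assms(1) by (simp add: mp_lincomb_def cSup_eq_Max)
  also have "\<dots> \<in> (\<lambda>l. A i l + s l) ` J"
    using assms(1) \<open>J \<noteq> {}\<close> by (intro Max_in) auto
  finally show ?thesis
    by blast
qed

lemma col_min_elem_norm_matrix_if_tight:
  assumes b_real: "\<forall>r<m. \<bar>b r\<bar> \<noteq> \<infinity>"
    and col_l: "\<forall>r<m. A r l \<noteq> \<infinity>"
    and below: "\<forall>r<m. A r l + s l \<le> b r"
    and tight: "b i = A i l + s l" and "i < m"
  shows "col_min_elem m (norm_matrix m A b) i l"
  unfolding col_min_elem_def
proof (intro allI impI)
  fix r assume "r < m"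
  obtain bi where bi: "b i = ereal bi"
    using b_real \<open>i < m\<close> by (cases "b i") auto
  obtain a t where a: "A i l = ereal a" and t: "s l = ereal t"
    using tight bi col_l \<open>i < m\<close> by (cases "A i l"; cases "s l") auto
  obtain br where br: "b r = ereal br"
    using b_real \<open>r < m\<close> by (cases "b r") auto
  show "norm_matrix m A b i l \<le> norm_matrix m A b r l"
  proof (cases "A r l = -\<infinity>")
    case False
    then obtain c where c: "A r l = ereal c"
      using col_l \<open>r < m\<close> by (cases "A r l") auto
    have "c + t \<le> br" and "bi = a + t"
      using below \<open>r < m\<close> c t br tight bi a by auto
    then show ?thesis
      using a c bi br by (simp add: norm_matrix_def)
  qed (simp add: norm_matrix_def)
qed

lemma lincomb_row_has_col_min:
  assumes A_S: "\<forall>i<m. \<forall>j<n. in_S (A i j)"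
    and b_reg: "\<forall>i<m. in_S (b i) \<and> b i \<noteq> -\<infinity>"
    and J_sub: "J \<subseteq> {..<n}"
    and J_comb: "is_lincomb m A J b"
    and "i < m"
  shows "\<exists>l\<in>J. col_min_elem m (norm_matrix m A b) i l"
proof -
  obtain s where b_eq: "\<forall>r<m. b r = mp_lincomb A J s r"
    using J_comb by (auto simp: is_lincomb_def)
  have "finite J"
    using J_sub finite_subset by blast
  then obtain l where "l \<in> J" and tight: "b i = A i l + s l"
    using mp_lincomb_attained[of J A s i] b_eq b_reg \<open>i < m\<close> by metis
  have "\<forall>r<m. A r l + s l \<le> b r"
    using b_eq \<open>l \<in> J\<close> by (auto simp: mp_lincomb_def intro: SUP_upper)
  moreover have "\<forall>r<m. A r l \<noteq> \<infinity>" and "\<forall>r<m. \<bar>b r\<bar> \<noteq> \<infinity>"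
    using A_S b_reg \<open>l \<in> J\<close> J_sub by (auto simp: in_S_def)
  ultimately show ?thesis
    using col_min_elem_norm_matrix_if_tight tight \<open>i < m\<close> \<open>l \<in> J\<close> by blast
qed

lemma k_count_le_card:
  assumes "finite J" and rows: "\<forall>i<m. \<exists>l\<in>J. l < n \<and> col_min_elem m Q i l"
  shows "k_count m n Q \<le> card J"
  unfolding k_count_def
proof (rule card_mono[OF \<open>finite J\<close>], safe)
  fix j i assume "i < m"
    and "\<forall>j'<n. col_min_elem m Q i j' \<longrightarrow> j' = j"
  then show "j \<in> J"
    using rows by blast
qed

theorem mainTheorem3:
  fixes m n :: nat and A :: "nat \<Rightarrow> nat \<Rightarrow> ereal" and b :: "nat \<Rightarrow> ereal"
    and J :: "nat set"
  assumes A_S: "\<forall>i<m. \<forall>j<n. in_S (A i j)"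
    and cols: "\<forall>j<n. \<exists>i<m. A i j \<noteq> -\<infinity>"
    and b_reg: "\<forall>i<m. in_S (b i) \<and> b i \<noteq> -\<infinity>"
    and solv: "has_solution m n A b"
    and J_sub: "J \<subseteq> {..<n}"
    and J_indep: "lin_indep_cols m A J"
    and J_comb: "is_lincomb m A J b"
  shows "(k_count m n (norm_matrix m A b) = 0 \<longrightarrow> n - card J \<le> n - 1)
       \<and> (k_count m n (norm_matrix m A b) \<noteq> 0 \<longrightarrow> n - card J \<le> n - k_count m n (norm_matrix m A b))"
proof -
  have "finite J"
    using J_sub finite_subset by blast
  have rows: "\<forall>i<m. \<exists>l\<in>J. col_min_elem m (norm_matrix m A b) i l"
    using lincomb_row_has_col_min[OF A_S b_reg J_sub J_comb] by blast
  then have "k_count m n (norm_matrix m A b) \<le> card J"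
    using k_count_le_card[OF \<open>finite J\<close>, of m n] J_sub by (meson lessThan_iff subsetD)
  moreover have "n - card J \<le> n - 1"
  proof (cases "n = 0")
    case False
    then obtain i where "i < m"
      using cols by blast
    then have "J \<noteq> {}"
      using rows by blast
    then show ?thesis
      using \<open>finite J\<close> by (simp add: Suc_leI card_gt_0_iff diff_le_mono2)
  qed simp
  ultimately show ?thesis
    by auto
qed

end
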